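(* Consider the secure distributed linearly separable computation problem with $\mathsf K_{\rm c}=1$ and $\mathsf M=\frac{\mathsf K}{\mathsf N}(\mathsf N-\mathsf N_{\rm r}+1)$. Then $$\eta^\star\ge\left\lceil\frac{\mathsf N}{\mathsf N-\mathsf N_{\rm r}+1}\right\rceil-1.$$
   Context: Problem setting. $\mathsf K,\mathsf N,\mathsf N_{\rm r},\mathsf M$ are positive integers with $\mathsf N_{\rm r}\le \mathsf N$ and $\mathsf N$ dividing $\mathsf K$. Fix a prime power $\mathsf q$ (sufficiently large) and a positive integer $\mathsf L$. Datasets $D_1,\dots,D_{\mathsf K}$ are independent; message $W_k=f_k(D_k)\in\mathbb F_{\mathsf q}^{\mathsf L}$, with $W_1,\dots,W_{\mathsf K}$ mutually independent and uniform over $\mathbb F_{\mathsf q}^{\mathsf L}$. The user wants $W_1+\cdots+W_{\mathsf K}$. A secure scheme consists of an assignment $\mathcal Z_n\subseteq[\mathsf K]$, $|\mathcal Z_n|\le\mathsf M$; a random variable $Q$ on a finite set independent of the datasets, given to all servers but not the user; transmissions $X_n=\psi_n(\{W_k:k\in\mathcal Z_n\},Q)\in\mathbb F_{\mathsf q}^{\mathsf T_n}$; decodability from $\{X_n:n\in\mathcal A\}$ for every $\mathcal A\subseteq[\mathsf N]$, $|\mathcal A|=\mathsf N_{\rm r}$; security $I(W_1,\dots,W_{\mathsf K};X_1,\dots,X_{\mathsf N}\mid W_1+\cdots+W_{\mathsf K})=0$. Communication cost $\mathsf R=\max_{|\mathcal A|=\mathsf N_{\rm r}}\sum_{n\in\mathcal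 A}\mathsf T_n/\mathsf L$; randomness size $\eta=H(Q)/\mathsf L$ ($\mathsf q$-ary units). $\mathsf R^\star$ is the minimum communication cost over secure schemes, and $\eta^\star$ is the minimum randomness size over secure schemes with $\mathsf R=\mathsf R^\star$. *)

theory Defs
  imports "HOL-Algebra.Ring" "HOL-Probability.Probability_Mass_Function" "HOL-Library.FuncSet"
begin

definition fvec :: "('f, 'm) ring_scheme \<Rightarrow> nat \<Rightarrow> 'f list set" where
  "fvec F L = {xs. length xs = L \<and> set xs \<subseteq> carrier F}"

definition vadd :: "('f, 'm) ring_scheme \<Rightarrow> 'f list \<Rightarrow> 'f list \<Rightarrow> 'f list" where
  "vadd F u v = map2 (\<lambda>a b. a \<oplus>\<^bsub>F\<^esub> b) u v"

definition msum :: "('f, 'm) ring_scheme \<Rightarrow> nat \<Rightarrow> nat \<Rightarrow> (nat \<Rightarrow> 'f list) \<Rightarrow> 'f list" where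
  "msum F K L W = foldr (\<lambda>k acc. vadd F (W k) acc) [0..<K] (replicate L \<zero>\<^bsub>F\<^esub>)"

definition msgspace :: "('f, 'm) ring_scheme \<Rightarrow> nat \<Rightarrow> nat \<Rightarrow> (nat \<Rightarrow> 'f list) set" where
  "msgspace F K L = PiE {..<K} (\<lambda>_. fvec F L)"

definition ent :: "real \<Rightarrow> 'a pmf \<Rightarrow> real" where
  "ent b p = - (\<Sum>x\<in>set_pmf p. pmf p x * log b (pmf p x))"

definition H :: "real \<Rightarrow> 'w pmf \<Rightarrow> ('w \<Rightarrow> 'a) \<Rightarrow> real" where
  "H b \<mu> X = ent b (map_pmf X \<mu>)"

definition cmi :: "real \<Rightarrow> 'w pmf \<Rightarrow> ('w \<Rightarrow> 'a) \<Rightarrow> ('w \<Rightarrow> 'b) \<Rightarrow> ('w \<Rightarrow> 'c) \<Rightarrow> real" where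
  "cmi b \<mu> X Y Z = H b \<mu> (\<lambda>w. (X w, Z w)) + H b \<mu> (\<lambda>w. (Y w, Z w))
                    - H b \<mu> (\<lambda>w. (X w, Y w, Z w)) - H b \<mu> Z"

definition joint :: "('f, 'm) ring_scheme \<Rightarrow> nat \<Rightarrow> nat \<Rightarrow> nat pmf \<Rightarrow> ((nat \<Rightarrow> 'f list) \<times> nat) pmf" where
  "joint F K L P = pair_pmf (pmf_of_set (msgspace F K L)) P"

text \<open>A secure scheme: assignment Z (server n < N gets datasets Z n \<subseteq> {..<K}, |Z n| \<le> M);
  common randomness Q with finite-support distribution P (servers indexed in nat);
  transmission of server n is psi n W s \<in> F^(T n), depending only on (W_k)_{k \<in> Z n} and s;
  decodability from any Nr servers; security I(W; X_1..X_N | sum W) = 0 (q-ary units).\<close>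
definition secure_scheme ::
  "('f, 'm) ring_scheme \<Rightarrow> nat \<Rightarrow> nat \<Rightarrow> nat \<Rightarrow> nat \<Rightarrow> nat \<Rightarrow>
   (nat \<Rightarrow> nat set) \<Rightarrow> nat pmf \<Rightarrow> (nat \<Rightarrow> nat) \<Rightarrow> (nat \<Rightarrow> (nat \<Rightarrow> 'f list) \<Rightarrow> nat \<Rightarrow> 'f list) \<Rightarrow> bool" where
  "secure_scheme F K N Nr M L Z P T psi \<longleftrightarrow>
     (\<forall>n<N. Z n \<subseteq> {..<K} \<and> card (Z n) \<le> M) \<and>
     finite (set_pmf P) \<and>
     (\<forall>n<N. \<forall>W\<in>msgspace F K L. \<forall>W'\<in>msgspace F K L. \<forall>s.
        (\<forall>k\<in>Z n. W k = W' k) \<longrightarrow> psi n W s = psi n W' s) \<and>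
     (\<forall>n<N. \<forall>W\<in>msgspace F K L. \<forall>s\<in>set_pmf P. psi n W s \<in> fvec F (T n)) \<and>
     (\<forall>A. A \<subseteq> {..<N} \<and> card A = Nr \<longrightarrow>
        (\<exists>dec. \<forall>W\<in>msgspace F K L. \<forall>s\<in>set_pmf P.
            dec (restrict (\<lambda>n. psi n W s) A) = msum F K L W)) \<and>
     cmi (real (card (carrier F))) (joint F K L P)
        (\<lambda>\<omega>. fst \<omega>)
        (\<lambda>\<omega>. restrict (\<lambda>n. psi n (fst \<omega>) (snd \<omega>)) {..<N})
        (\<lambda>\<omega>. msum F K L (fst \<omega>)) = 0"

definition comm_cost :: "nat \<Rightarrow> nat \<Rightarrow> nat \<Rightarrow> (nat \<Rightarrow> nat) \<Rightarrow> real" where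
  "comm_cost N Nr L T = real (Max {(\<Sum>n\<in>A. T n) | A. A \<subseteq> {..<N} \<and> card A = Nr}) / real L"

definition rand_size :: "('f, 'm) ring_scheme \<Rightarrow> nat \<Rightarrow> nat pmf \<Rightarrow> real" where
  "rand_size F L P = ent (real (card (carrier F))) P / real L"

definition R_star :: "('f, 'm) ring_scheme \<Rightarrow> nat \<Rightarrow> nat \<Rightarrow> nat \<Rightarrow> nat \<Rightarrow> nat \<Rightarrow> real" where
  "R_star F K N Nr M L = Inf {comm_cost N Nr L T | Z P T psi. secure_scheme F K N Nr M L Z P T psi}"

end

theory Submission
  imports Defs
begin

(* With storage exactly M = K (N - Nr + 1) / N, decodability from any Nr servers forces every
   dataset onto at least g = N - Nr + 1 servers, and double counting makes all these bounds
   tight: every dataset sits on exactly g servers.  Take a minimal set C of datasets meeting the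
   storage of every server.  As C meets all N servers, N <= |C| g.  Minimality gives each k in C
   a server storing k and no other element of C, so for each k in C at least N - (g - 1) = Nr
   servers store no element of C other than k.  Decoding the sum from these Nr servers shows
   that the transmissions X, the randomness Q and the messages outside C determine every W_k
   with k in C, so each value of (X, W_1 + ... + W_K) has probability at most q^(-|C| L) and
   H(X, sum) >= |C| L.  Security, I(W; X | sum) = 0, yields H(X, sum) <= H(Q) + H(sum)
   <= H(Q) + L, so eta >= |C| - 1 >= ceil(N / g) - 1. *)

section \<open>Entropy of finitely supported distributions\<close>

lemma ent_altdef: "ent b p = (\<Sum>x\<in>set_pmf p. pmf p x * - log b (pmf p x))"
  unfolding ent_def by (simp add: sum_negf)

lemma pmf_map_eq_sum:
  assumes "finite (set_pmf p)"
  shows "pmf (map_pmf f p) y = (\<Sum>x | x \<in> set_pmf p \<and> f x = y. pmf p x)"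
proof -
  have "pmf (map_pmf f p) y = measure p (f -` {y} \<inter> set_pmf p)"
    by (simp add: pmf_map measure_Int_set_pmf)
  also have "\<dots> = (\<Sum>x | x \<in> set_pmf p \<and> f x = y. pmf p x)"
    using assms by (subst measure_measure_pmf_finite) (auto intro: sum.cong)
  finally show ?thesis .
qed

lemma ent_map_pmf_le:
  assumes fin: "finite (set_pmf p)" and b: "1 < b"
  shows "ent b (map_pmf f p) \<le> ent b p"
proof -
  define S where "S = set_pmf p"
  define pm where "pm y = (\<Sum>x | x \<in> S \<and> f x = y. pmf p x)" for y
  have pmf_eq: "pmf (map_pmf f p) y = pm y" for y
    unfolding pm_def S_def by (rule pmf_map_eq_sum[OF fin])
  have le: "pmf p x \<le> pm (f x)" if "x \<in> S" for x
    unfolding pm_def using that fin S_def by (intro member_le_sum) auto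
  have "ent b (map_pmf f p) = (\<Sum>y\<in>f ` S. pm y * - log b (pm y))"
    by (simp add: ent_altdef pmf_eq S_def)
  also have "\<dots> = (\<Sum>y\<in>f ` S. \<Sum>x | x \<in> S \<and> f x = y. pmf p x * - log b (pm (f x)))"
    unfolding pm_def by (intro sum.cong refl) (auto simp: sum_distrib_right sum_negf)
  also have "\<dots> = (\<Sum>x\<in>S. pmf p x * - log b (pm (f x)))"
    using fin S_def by (intro sum.image_gen[symmetric]) auto
  also have "\<dots> \<le> (\<Sum>x\<in>S. pmf p x * - log b (pmf p x))"
  proof (rule sum_mono)
    fix x assume x: "x \<in> S"
    then have "0 < pmf p x" by (simp add: S_def pmf_positive)
    with le[OF x] b show "pmf p x * - log b (pm (f x)) \<le> pmf p x * - log b (pmf p x)"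
      by (intro mult_left_mono) auto
  qed
  also have "\<dots> = ent b p" by (simp add: ent_altdef S_def)
  finally show ?thesis .
qed

lemma ent_pair_pmf:
  assumes fp: "finite (set_pmf p)" and fq: "finite (set_pmf q)"
  shows "ent b (pair_pmf p q) = ent b p + ent b q"
proof -
  let ?A = "set_pmf p" and ?C = "set_pmf q"
  define lp where "lp a = pmf p a * - log b (pmf p a)" for a
  define lq where "lq c = pmf q c * - log b (pmf q c)" for c
  have "ent b (pair_pmf p q) = (\<Sum>a\<in>?A. \<Sum>c\<in>?C. pmf p a * pmf q c * - log b (pmf p a * pmf q c))"
    unfolding ent_altdef set_pair_pmf sum.cartesian_product by (auto intro!: sum.cong simp: pmf_pair)
  also have "\<dots> = (\<Sum>a\<in>?A. \<Sum>c\<in>?C. pmf q c * lp a + pmf p a * lq c)"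
    unfolding lp_def lq_def
    by (intro sum.cong refl) (simp add: log_mult pmf_positive algebra_simps)
  also have "\<dots> = (\<Sum>a\<in>?A. (\<Sum>c\<in>?C. pmf q c) * lp a + pmf p a * (\<Sum>c\<in>?C. lq c))"
    by (simp only: sum.distrib flip: sum_distrib_left sum_distrib_right)
  also have "\<dots> = (\<Sum>a\<in>?A. lp a) + (\<Sum>a\<in>?A. pmf p a) * (\<Sum>c\<in>?C. lq c)"
    using fq by (simp add: sum_pmf_eq_1 sum.distrib sum_distrib_right)
  also have "\<dots> = ent b p + ent b q"
    using fp by (simp add: sum_pmf_eq_1 ent_altdef lp_def lq_def)
  finally show ?thesis .
qed

lemma ent_pmf_of_set:
  assumes "finite A" "A \<noteq> {}"
  shows "ent b (pmf_of_set A) = log b (card A)"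
  using assms by (simp add: ent_altdef log_divide card_gt_0_iff)

lemma ent_le_log_card:
  assumes fin: "finite (set_pmf p)" and b: "1 < b" and n: "card (set_pmf p) \<le> n"
  shows "ent b p \<le> log b n"
proof -
  let ?S = "set_pmf p"
  have n0: "0 < n" using n fin set_pmf_not_empty[of p] by (metis card_gt_0_iff leD not_gr0)
  have sum1: "(\<Sum>x\<in>?S. pmf p x) = 1" using fin by (simp add: sum_pmf_eq_1)
  have "ent b p - log b n = (\<Sum>x\<in>?S. pmf p x * - log b (pmf p x)) - (\<Sum>x\<in>?S. pmf p x) * log b n"
    by (simp add: ent_altdef sum1)
  also have "\<dots> = (\<Sum>x\<in>?S. pmf p x * log b (1 / (pmf p x * n)))"
    unfolding sum_distrib_right sum_subtractf[symmetric] using n0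
    by (intro sum.cong refl) (simp add: log_divide log_mult pmf_positive algebra_simps)
  also have "\<dots> \<le> (\<Sum>x\<in>?S. pmf p x * ((1 / (pmf p x * n) - 1) / ln b))"
  proof (intro sum_mono mult_left_mono)
    fix x assume "x \<in> ?S"
    then have "0 < 1 / (pmf p x * n)" using n0 by (simp add: pmf_positive)
    then show "log b (1 / (pmf p x * n)) \<le> (1 / (pmf p x * n) - 1) / ln b"
      using b ln_le_minus_one by (simp add: log_def divide_right_mono)
  qed simp
  also have "\<dots> = (\<Sum>x\<in>?S. (1 / n - pmf p x) / ln b)"
    using n0 b by (intro sum.cong refl) (auto simp: set_pmf_iff field_simps)
  also have "\<dots> = (card ?S / n - 1) / ln b"
    by (simp add: sum_divide_distrib[symmetric] sum_subtractf sum1)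
  also have "\<dots> \<le> 0"
    using n n0 b by (intro divide_nonpos_pos) (auto simp: field_simps)
  finally show ?thesis by simp
qed

lemma neg_log_le_ent:
  assumes fin: "finite (set_pmf p)" and b: "1 < b" and c: "\<And>x. pmf p x \<le> c"
  shows "- log b c \<le> ent b p"
proof -
  have "- log b c = (\<Sum>x\<in>set_pmf p. pmf p x * - log b c)"
    using fin by (simp add: sum_negf sum_distrib_right[symmetric] sum_pmf_eq_1)
  also have "\<dots> \<le> (\<Sum>x\<in>set_pmf p. pmf p x * - log b (pmf p x))"
  proof (intro sum_mono mult_left_mono)
    fix x assume "x \<in> set_pmf p"
    then have "0 < pmf p x" by (simp add: pmf_positive)
    then show "- log b c \<le> - log b (pmf p x)"
      using b c[of x] by simp
  qed simp
  also have "\<dots> = ent b p" by (simp add: ent_altdef)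
  finally show ?thesis .
qed

lemma map_pmf_pair_pmf_eq_bind:
  "map_pmf f (pair_pmf p q) = bind_pmf q (\<lambda>s. map_pmf (\<lambda>a. f (a, s)) p)"
  unfolding pair_pmf_def map_bind_pmf map_return_pmf
  by (subst bind_commute_pmf) (simp add: map_pmf_def)

lemma pmf_map_pair_pmf_of_set_le:
  assumes "finite A" "A \<noteq> {}"
    and inj: "\<And>s. s \<in> set_pmf P \<Longrightarrow> inj_on r {a\<in>A. f (a, s) = z}"
  shows "pmf (map_pmf f (pair_pmf (pmf_of_set A) P)) z \<le> card (r ` A) / card A"
proof -
  have fibre: "pmf (map_pmf (\<lambda>a. f (a, s)) (pmf_of_set A)) z \<le> card (r ` A) / card A"
    if "s \<in> set_pmf P" for s
  proof -
    have "card {a\<in>A. f (a, s) = z} = card (r ` {a\<in>A. f (a, s) = z})"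
      using inj[OF that] by (simp add: card_image)
    also have "\<dots> \<le> card (r ` A)"
      using assms(1) by (intro card_mono) auto
    finally show ?thesis
      using assms(1,2) by (simp add: pmf_map measure_pmf_of_set divide_right_mono Int_def
          conj_commute)
  qed
  have "pmf (map_pmf f (pair_pmf (pmf_of_set A) P)) z
      = measure_pmf.expectation P (\<lambda>s. pmf (map_pmf (\<lambda>a. f (a, s)) (pmf_of_set A)) z)"
    by (simp add: map_pmf_pair_pmf_eq_bind pmf_bind)
  also have "\<dots> \<le> card (r ` A) / card A"
    using fibre by (intro measure_pmf.integral_le_const) (auto simp: AE_measure_pmf_iff
        intro!: measure_pmf.integrable_const_bound[where B=1] pmf_le_1)
  finally show ?thesis .
qed

section \<open>Vectors and message tuples\<close>

lemma fvec_nth_closed: "xs \<in> fvec F L \<Longrightarrow> i < L \<Longrightarrow> xs ! i \<in> carrier F"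
  unfolding fvec_def by auto

lemma fvec_eq_lists: "fvec F L = {xs. set xs \<subseteq> carrier F \<and> length xs = L}"
  unfolding fvec_def by auto

lemma finite_fvec: "finite (carrier F) \<Longrightarrow> finite (fvec F L)"
  unfolding fvec_eq_lists by (rule finite_lists_length_eq)

lemma card_fvec: "finite (carrier F) \<Longrightarrow> card (fvec F L) = card (carrier F) ^ L"
  unfolding fvec_eq_lists by (rule card_lists_length_eq)

lemma msgspace_memD: "W \<in> msgspace F K L \<Longrightarrow> j < K \<Longrightarrow> W j \<in> fvec F L"
  unfolding msgspace_def by auto

lemma msgspace_upd:
  "W \<in> msgspace F K L \<Longrightarrow> k < K \<Longrightarrow> v \<in> fvec F L \<Longrightarrow> W(k := v) \<in> msgspace F K L"
  unfolding msgspace_def by (auto simp: PiE_iff extensional_def)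

lemma finite_msgspace: "finite (carrier F) \<Longrightarrow> finite (msgspace F K L)"
  unfolding msgspace_def by (simp add: finite_PiE finite_fvec)

lemma card_msgspace: "finite (carrier F) \<Longrightarrow> card (msgspace F K L) = card (carrier F) ^ (L * K)"
  unfolding msgspace_def by (simp add: card_PiE card_fvec power_mult)

context abelian_group
begin

lemma replicate_zero_in_fvec: "replicate L \<zero> \<in> fvec G L"
  unfolding fvec_def by auto

lemma zero_in_msgspace: "(\<lambda>j\<in>{..<K}. replicate L \<zero>) \<in> msgspace G K L"
  unfolding msgspace_def by (simp add: replicate_zero_in_fvec)

lemma vadd_closed:
  assumes "u \<in> fvec G L" "v \<in> fvec G L"
  shows "vadd G u v \<in> fvec G L"
proof -
  have "u ! i \<oplus> v ! i \<in> carrier G" if "i < L" for i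
    using assms that by (simp add: fvec_nth_closed)
  with assms show ?thesis unfolding fvec_def vadd_def by (auto simp: set_zip)
qed

lemma nth_vadd:
  "u \<in> fvec G L \<Longrightarrow> v \<in> fvec G L \<Longrightarrow> i < L \<Longrightarrow> vadd G u v ! i = u ! i \<oplus> v ! i"
  unfolding fvec_def vadd_def by simp

lemma vadd_right_cancel:
  assumes "u \<in> fvec G L" "v \<in> fvec G L" "w \<in> fvec G L" "vadd G u w = vadd G v w"
  shows "u = v"
proof (rule nth_equalityI)
  show "length u = length v" using assms by (simp add: fvec_def)
  fix i assume "i < length u"
  then have i: "i < L" using assms by (simp add: fvec_def)
  with assms have "u ! i \<oplus> w ! i = v ! i \<oplus> w ! i" by (metis nth_vadd)
  with assms i show "u ! i = v ! i" by (simp add: fvec_nth_closed)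
qed

lemma vadd_left_cancel:
  assumes "u \<in> fvec G L" "v \<in> fvec G L" "w \<in> fvec G L" "vadd G w u = vadd G w v"
  shows "u = v"
proof (rule nth_equalityI)
  show "length u = length v" using assms by (simp add: fvec_def)
  fix i assume "i < length u"
  then have i: "i < L" using assms by (simp add: fvec_def)
  with assms have "w ! i \<oplus> u ! i = w ! i \<oplus> v ! i" by (metis nth_vadd)
  with assms i show "u ! i = v ! i" by (simp add: fvec_nth_closed)
qed

lemma foldr_vadd_closed:
  "\<forall>k\<in>set ks. W k \<in> fvec G L \<Longrightarrow> z \<in> fvec G L \<Longrightarrow>
    foldr (\<lambda>k. vadd G (W k)) ks z \<in> fvec G L"
  by (induction ks) (auto intro: vadd_closed)

lemma foldr_vadd_eq_imp_eq_at:
  assumes "distinct ks" "k \<in> set ks" "\<forall>j\<in>set ks. j \<noteq> k \<longrightarrow> W j = W' j"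
    and "\<forall>j\<in>set ks. W j \<in> fvec G L" "\<forall>j\<in>set ks. W' j \<in> fvec G L" "z \<in> fvec G L"
    and "foldr (\<lambda>k. vadd G (W k)) ks z = foldr (\<lambda>k. vadd G (W' k)) ks z"
  shows "W k = W' k"
  using assms
proof (induction ks)
  case (Cons a ks)
  define r where "r = foldr (\<lambda>k. vadd G (W k)) ks z"
  define r' where "r' = foldr (\<lambda>k. vadd G (W' k)) ks z"
  have eq: "vadd G (W a) r = vadd G (W' a) r'" using Cons.prems(7) by (simp add: r_def r'_def)
  have closed: "r \<in> fvec G L" "r' \<in> fvec G L" "W a \<in> fvec G L" "W' a \<in> fvec G L"
    using Cons.prems(4-6) by (auto simp: r_def r'_def intro!: foldr_vadd_closed)
  show ?case
  proof (cases "a = k")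
    case True
    with Cons.prems(1,3) have "r = r'"
      unfolding r_def r'_def by (intro foldr_cong) auto
    with True eq show ?thesis using vadd_right_cancel[OF closed(3,4,2)] by simp
  next
    case False
    with Cons.prems(3) have "W a = W' a" by simp
    with eq have "r = r'" using vadd_left_cancel[OF closed(1,2,4)] by simp
    with False Cons show ?thesis by (simp add: r_def r'_def)
  qed
qed simp

lemma msum_closed: "W \<in> msgspace G K L \<Longrightarrow> msum G K L W \<in> fvec G L"
  unfolding msum_def by (intro foldr_vadd_closed replicate_zero_in_fvec) (auto simp: msgspace_memD)

lemma msum_eq_imp_eq_at:
  assumes "W \<in> msgspace G K L" "W' \<in> msgspace G K L" "k < K"
    and "\<forall>j<K. j \<noteq> k \<longrightarrow> W j = W' j" and "msum G K L W = msum G K L W'"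
  shows "W k = W' k"
proof (rule foldr_vadd_eq_imp_eq_at[of "[0..<K]" k W W' L "replicate L \<zero>"])
  show "foldr (\<lambda>k. vadd G (W k)) [0..<K] (replicate L \<zero>) =
    foldr (\<lambda>k. vadd G (W' k)) [0..<K] (replicate L \<zero>)"
    using assms(5) unfolding msum_def .
qed (use assms msgspace_memD replicate_zero_in_fvec in auto)

end

section \<open>Storage patterns\<close>

definition holders :: "(nat \<Rightarrow> nat set) \<Rightarrow> nat \<Rightarrow> nat \<Rightarrow> nat set" where
  "holders Z N k = {n\<in>{..<N}. k \<in> Z n}"

definition covers_servers :: "(nat \<Rightarrow> nat set) \<Rightarrow> nat \<Rightarrow> nat set \<Rightarrow> bool" where
  "covers_servers Z N C \<longleftrightarrow> (\<forall>n<N. Z n \<inter> C \<noteq> {})"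

definition isolating_servers :: "(nat \<Rightarrow> nat set) \<Rightarrow> nat \<Rightarrow> nat set \<Rightarrow> nat \<Rightarrow> nat set" where
  "isolating_servers Z N D k = {n\<in>{..<N}. k \<notin> Z n \<or> Z n \<inter> D \<subseteq> {k}}"

lemma sum_card_holders:
  assumes "\<forall>n<N. Z n \<subseteq> {..<K}"
  shows "(\<Sum>k<K. card (holders Z N k)) = (\<Sum>n<N. card (Z n))"
proof -
  have "(\<Sum>k<K. card (holders Z N k)) = (\<Sum>k<K. \<Sum>n<N. if k \<in> Z n then 1 else 0)"
    unfolding holders_def by (simp add: sum.If_cases Int_def)
  also have "\<dots> = (\<Sum>n<N. \<Sum>k<K. if k \<in> Z n then 1 else 0)"
    by (rule sum.swap)
  also have "\<dots> = (\<Sum>n<N. card (Z n))"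
    using assms by (intro sum.cong refl) (simp add: sum.If_cases Int_absorb1)
  finally show ?thesis .
qed

lemma replication_tight:
  assumes storage: "\<forall>n<N. Z n \<subseteq> {..<K} \<and> card (Z n) \<le> M"
    and replication: "\<forall>k<K. g \<le> card (holders Z N k)"
    and budget: "N * M = K * g"
  shows "\<forall>k<K. card (holders Z N k) = g" and "\<forall>n<N. card (Z n) = M"
proof -
  have sums: "(\<Sum>k<K. card (holders Z N k)) = (\<Sum>n<N. card (Z n))"
    using storage by (simp add: sum_card_holders)
  have "(\<Sum>k<K. g) \<le> (\<Sum>k<K. card (holders Z N k))"
    using replication by (intro sum_mono) auto
  moreover have "(\<Sum>n<N. card (Z n)) \<le> (\<Sum>n<N. M)"
    using storage by (intro sum_mono) auto
  ultimately have "(\<Sum>k<K. g) = (\<Sum>k<K. card (holders Z N k))"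
    and "(\<Sum>n<N. card (Z n)) = (\<Sum>n<N. M)"
    using budget sums by (simp_all add: mult.commute)
  from this[THEN sum_mono_inv] show "\<forall>k<K. card (holders Z N k) = g" and "\<forall>n<N. card (Z n) = M"
    using storage replication by auto
qed

lemma covers_servers_card_bound:
  assumes "covers_servers Z N C" "finite C" "\<forall>k\<in>C. card (holders Z N k) \<le> g"
  shows "N \<le> card C * g"
proof -
  have "{..<N} \<subseteq> (\<Union>k\<in>C. holders Z N k)"
    using assms(1) unfolding covers_servers_def holders_def by auto
  then have "N \<le> card (\<Union>k\<in>C. holders Z N k)"
    using card_mono[of "\<Union>k\<in>C. holders Z N k" "{..<N}"] assms(2) by (simp add: holders_def)
  also have "\<dots> \<le> (\<Sum>k\<in>C. card (holders Z N k))"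
    by (rule card_UN_le[OF assms(2)])
  also have "\<dots> \<le> card C * g"
    using sum_mono[of C _ "\<lambda>_. g"] assms(3) by simp
  finally show ?thesis .
qed

lemma exists_minimal_cover:
  assumes "covers_servers Z N C0" "finite C0"
  obtains C where "C \<subseteq> C0" "covers_servers Z N C" "\<forall>k\<in>C. \<not> covers_servers Z N (C - {k})"
proof -
  obtain C where C: "C \<subseteq> C0 \<and> covers_servers Z N C"
    and least: "\<And>C'. C' \<subseteq> C0 \<and> covers_servers Z N C' \<Longrightarrow> card C \<le> card C'"
    using ex_has_least_nat[of "\<lambda>C. C \<subseteq> C0 \<and> covers_servers Z N C" C0 card] assms by blast
  have "\<not> covers_servers Z N (C - {k})" if "k \<in> C" for k
  proof
    assume "covers_servers Z N (C - {k})"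
    with C least[of "C - {k}"] have "card C \<le> card (C - {k})" by blast
    with that C assms(2) show False
      by (metis card_Diff1_less finite_subset not_le)
  qed
  with C that show ?thesis by blast
qed

lemma covers_servers_private_server:
  assumes "covers_servers Z N C" "\<not> covers_servers Z N (C - {k})" "k \<in> C"
  obtains p where "p < N" "Z p \<inter> C = {k}"
  using assms unfolding covers_servers_def by blast

lemma card_isolating_servers_gt:
  assumes "p < N" "Z p \<inter> D = {k}"
  shows "N < card (isolating_servers Z N D k) + card (holders Z N k)"
proof -
  have p: "p \<in> holders Z N k" using assms by (auto simp: holders_def)
  have "{..<N} \<subseteq> isolating_servers Z N D k \<union> (holders Z N k - {p})"
    using assms by (auto simp: isolating_servers_def holders_def)
  then have "N \<le> card (isolating_servers Z N D k \<union> (holders Z N k - {p}))"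
    using card_mono[of "isolating_servers Z N D k \<union> (holders Z N k - {p})" "{..<N}"]
    by (simp add: isolating_servers_def holders_def)
  also have "\<dots> \<le> card (isolating_servers Z N D k) + card (holders Z N k - {p})"
    by (rule card_Un_le)
  also have "card (holders Z N k - {p}) < card (holders Z N k)"
    using p by (intro card_Diff1_less) (auto simp: holders_def)
  finally show ?thesis by simp
qed

lemma exists_isolated_datasets:
  assumes storage: "\<forall>n<N. Z n \<subseteq> {..<K} \<and> card (Z n) \<le> M"
    and replication: "\<forall>k<K. N - Nr + 1 \<le> card (holders Z N k)"
    and budget: "N * M = K * (N - Nr + 1)" and "0 < M" and "Nr \<le> N"
  obtains C where "C \<subseteq> {..<K}" "N \<le> card C * (N - Nr + 1)"
    "\<forall>k\<in>C. Nr \<le> card (isolating_servers Z N C k)"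
proof -
  note tight = replication_tight[OF storage replication budget]
  have "covers_servers Z N {..<K}"
    using storage tight(2) \<open>0 < M\<close> unfolding covers_servers_def
    by (metis Int_absorb2 card.empty less_irrefl)
  then obtain C where C: "C \<subseteq> {..<K}" "covers_servers Z N C"
    and minimal: "\<forall>k\<in>C. \<not> covers_servers Z N (C - {k})"
    by (rule exists_minimal_cover) auto
  have "N \<le> card C * (N - Nr + 1)"
    using C tight(1) by (intro covers_servers_card_bound) (auto dest: finite_subset)
  moreover have "Nr \<le> card (isolating_servers Z N C k)" if k: "k \<in> C" for k
  proof -
    from minimal k have "\<not> covers_servers Z N (C - {k})" by blast
    then obtain p where "p < N" "Z p \<inter> C = {k}"
      by (rule covers_servers_private_server[OF C(2) _ k])
    then have "N < card (isolating_servers Z N C k) + card (holders Z N k)"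
      by (rule card_isolating_servers_gt)
    with tight(1) C(1) k \<open>Nr \<le> N\<close> show ?thesis by auto
  qed
  ultimately show ?thesis using C(1) that by blast
qed

section \<open>Secure schemes\<close>

definition transmissions ::
  "(nat \<Rightarrow> (nat \<Rightarrow> 'f list) \<Rightarrow> nat \<Rightarrow> 'f list) \<Rightarrow> nat \<Rightarrow> (nat \<Rightarrow> 'f list) \<times> nat \<Rightarrow> nat \<Rightarrow> 'f list"
  where "transmissions psi N \<omega> = restrict (\<lambda>n. psi n (fst \<omega>) (snd \<omega>)) {..<N}"

lemma secure_scheme_storage:
  "secure_scheme F K N Nr M L Z P T psi \<Longrightarrow> \<forall>n<N. Z n \<subseteq> {..<K} \<and> card (Z n) \<le> M"
  by (simp add: secure_scheme_def)

lemma secure_scheme_finite_randomness: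
  "secure_scheme F K N Nr M L Z P T psi \<Longrightarrow> finite (set_pmf P)"
  by (simp add: secure_scheme_def)

lemma secure_scheme_local:
  assumes "secure_scheme F K N Nr M L Z P T psi" "n < N"
    "W \<in> msgspace F K L" "W' \<in> msgspace F K L" "\<forall>k\<in>Z n. W k = W' k"
  shows "psi n W s = psi n W' s"
proof -
  have "\<forall>n<N. \<forall>W\<in>msgspace F K L. \<forall>W'\<in>msgspace F K L. \<forall>s.
      (\<forall>k\<in>Z n. W k = W' k) \<longrightarrow> psi n W s = psi n W' s"
    using assms(1) unfolding secure_scheme_def by (elim conjE)
  with assms(2-5) show ?thesis by blast
qed

lemma secure_scheme_decodes:
  assumes ss: "secure_scheme F K N Nr M L Z P T psi" and A: "A \<subseteq> {..<N}" "card A = Nr"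
    and "s \<in> set_pmf P" "W \<in> msgspace F K L" "W' \<in> msgspace F K L"
    and "\<forall>n\<in>A. psi n W s = psi n W' s"
  shows "msum F K L W = msum F K L W'"
proof -
  have "\<forall>A. A \<subseteq> {..<N} \<and> card A = Nr \<longrightarrow> (\<exists>dec. \<forall>W\<in>msgspace F K L. \<forall>s\<in>set_pmf P.
      dec (restrict (\<lambda>n. psi n W s) A) = msum F K L W)"
    using ss unfolding secure_scheme_def by (elim conjE)
  with A obtain dec where dec: "\<forall>W\<in>msgspace F K L. \<forall>s\<in>set_pmf P.
      dec (restrict (\<lambda>n. psi n W s) A) = msum F K L W"
    by blast
  have "restrict (\<lambda>n. psi n W s) A = restrict (\<lambda>n. psi n W' s) A"
    using assms(7) by (intro restrict_ext) blast
  with dec assms(4-6) show ?thesis by metis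
qed

lemma secure_scheme_security:
  "secure_scheme F K N Nr M L Z P T psi \<Longrightarrow>
     cmi (card (carrier F)) (joint F K L P) fst (transmissions psi N) (\<lambda>\<omega>. msum F K L (fst \<omega>)) = 0"
  unfolding secure_scheme_def transmissions_def[abs_def] by (elim conjE)

context abelian_group
begin

lemma card_carrier_gt_1:
  assumes "finite (carrier G)" "carrier G \<noteq> {\<zero>}"
  shows "1 < card (carrier G)"
proof -
  have "{\<zero>} \<subset> carrier G" using assms(2) zero_closed by blast
  from psubset_card_mono[OF assms(1) this] show ?thesis by simp
qed

lemma msgspace_nonempty: "msgspace G K L \<noteq> {}"
  using zero_in_msgspace[of L K] by blast

lemma set_pmf_joint:
  assumes "finite (carrier G)"
  shows "set_pmf (joint G K L P) = msgspace G K L \<times> set_pmf P"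
  using assms msgspace_nonempty unfolding joint_def set_pair_pmf by (simp add: finite_msgspace)

lemma secure_scheme_replication:
  assumes ss: "secure_scheme G K N Nr M L Z P T psi"
    and "0 < L" "carrier G \<noteq> {\<zero>}" "Nr \<le> N" "k < K"
  shows "N - Nr + 1 \<le> card (holders Z N k)"
proof (rule ccontr)
  assume "\<not> ?thesis"
  then have "Nr \<le> card ({..<N} - holders Z N k)"
    using \<open>Nr \<le> N\<close> by (subst card_Diff_subset) (auto simp: holders_def)
  then obtain A where A: "A \<subseteq> {..<N} - holders Z N k" "card A = Nr"
    by (meson obtain_subset_with_card_n)
  obtain a where a: "a \<in> carrier G" "a \<noteq> \<zero>" using assms(3) zero_closed by blast
  obtain s where s: "s \<in> set_pmf P" using set_pmf_not_empty by fast
  define W0 where "W0 = (\<lambda>j\<in>{..<K}. replicate L \<zero>)"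
  define W1 where "W1 = W0(k := replicate L a)"
  have W0: "W0 \<in> msgspace G K L" unfolding W0_def by (rule zero_in_msgspace)
  have W1: "W1 \<in> msgspace G K L"
    unfolding W1_def using a \<open>k < K\<close> by (intro msgspace_upd W0) (auto simp: fvec_def)
  have "\<forall>n\<in>A. psi n W1 s = psi n W0 s"
  proof
    fix n assume "n \<in> A"
    with A have "n < N" "\<forall>j\<in>Z n. W1 j = W0 j" by (auto simp: holders_def W1_def)
    then show "psi n W1 s = psi n W0 s" by (rule secure_scheme_local[OF ss _ W1 W0])
  qed
  with A have "msum G K L W1 = msum G K L W0"
    by (intro secure_scheme_decodes[OF ss _ _ s W1 W0]) auto
  with \<open>k < K\<close> have "W1 k = W0 k"
    by (intro msum_eq_imp_eq_at[OF W1 W0]) (auto simp: W1_def)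
  then have "replicate L a = replicate L \<zero>"
    using \<open>k < K\<close> by (simp add: W1_def W0_def)
  with \<open>0 < L\<close> a show False by simp
qed

lemma secure_scheme_recovers_isolated_at:
  assumes ss: "secure_scheme G K N Nr M L Z P T psi" and "D \<subseteq> {..<K}"
    and "k \<in> D" and iso: "Nr \<le> card (isolating_servers Z N D k)"
    and s: "s \<in> set_pmf P" and W: "W \<in> msgspace G K L" and W': "W' \<in> msgspace G K L"
    and same_tx: "\<forall>n<N. psi n W s = psi n W' s"
    and same_outside: "\<forall>j\<in>{..<K} - D. W j = W' j"
  shows "W k = W' k"
proof -
  obtain A where A: "A \<subseteq> isolating_servers Z N D k" "card A = Nr"
    using obtain_subset_with_card_n[OF iso] by blast
  then have A_servers: "A \<subseteq> {..<N}" by (auto simp: isolating_servers_def)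
  have k: "k < K" using assms(2,3) by blast
  (* Every isolating server sees V as it sees W (if it does not store k) or as W'. *)
  define V where "V = W(k := W' k)"
  have V: "V \<in> msgspace G K L" unfolding V_def using k W' by (intro msgspace_upd W msgspace_memD)
  have "\<forall>n\<in>A. psi n V s = psi n W s"
  proof
    fix n assume "n \<in> A"
    then have n: "n < N" "n \<in> isolating_servers Z N D k" using A A_servers by auto
    show "psi n V s = psi n W s"
    proof (cases "k \<in> Z n")
      case False
      then have "\<forall>j\<in>Z n. V j = W j" by (auto simp: V_def)
      with n show ?thesis by (intro secure_scheme_local[OF ss _ V W])
    next
      case True
      with n have "Z n \<inter> D \<subseteq> {k}" by (auto simp: isolating_servers_def)
      moreover have "Z n \<subseteq> {..<K}" using n secure_scheme_storage[OF ss] by blast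
      ultimately have "\<forall>j\<in>Z n. V j = W' j" using same_outside by (auto simp: V_def)
      with n have "psi n V s = psi n W' s" by (intro secure_scheme_local[OF ss _ V W'])
      with same_tx n show ?thesis by auto
    qed
  qed
  with A A_servers have "msum G K L V = msum G K L W"
    by (intro secure_scheme_decodes[OF ss _ _ s V W]) auto
  with k have "V k = W k"
    by (intro msum_eq_imp_eq_at[OF V W]) (auto simp: V_def)
  then show ?thesis by (simp add: V_def)
qed

lemma secure_scheme_recovers_isolated:
  assumes ss: "secure_scheme G K N Nr M L Z P T psi" and "D \<subseteq> {..<K}"
    and iso: "\<forall>k\<in>D. Nr \<le> card (isolating_servers Z N D k)"
    and "s \<in> set_pmf P" "W \<in> msgspace G K L" "W' \<in> msgspace G K L"
    and "\<forall>n<N. psi n W s = psi n W' s" "\<forall>j\<in>{..<K} - D. W j = W' j"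
  shows "W = W'"
proof (rule PiE_ext)
  show "W \<in> PiE {..<K} (\<lambda>_. fvec G L)" "W' \<in> PiE {..<K} (\<lambda>_. fvec G L)"
    using assms(5,6) by (simp_all add: msgspace_def)
  fix j assume "j \<in> {..<K}"
  then show "W j = W' j"
    using assms secure_scheme_recovers_isolated_at[OF ss assms(2) _ _ assms(4-8)]
    by (cases "j \<in> D") auto
qed

lemma secure_scheme_pmf_transmissions_le:
  assumes ss: "secure_scheme G K N Nr M L Z P T psi" and fin: "finite (carrier G)"
    and D: "D \<subseteq> {..<K}" and iso: "\<forall>k\<in>D. Nr \<le> card (isolating_servers Z N D k)"
  shows "pmf (map_pmf (\<lambda>\<omega>. (transmissions psi N \<omega>, msum G K L (fst \<omega>))) (joint G K L P)) z
           \<le> 1 / real (card (carrier G)) ^ (card D * L)"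
proof -
  define q where "q = card (carrier G)"
  define MS where "MS = msgspace G K L"
  define f where "f = (\<lambda>\<omega>. (transmissions psi N \<omega>, msum G K L (fst \<omega>)))"
  define r where "r W = restrict W ({..<K} - D)" for W :: "nat \<Rightarrow> 'a list"
  have inj: "inj_on r {W\<in>MS. f (W, s) = z}" if "s \<in> set_pmf P" for s
  proof (rule inj_onI)
    fix W W'
    assume W: "W \<in> {W\<in>MS. f (W, s) = z}" and W': "W' \<in> {W\<in>MS. f (W, s) = z}"
      and r: "r W = r W'"
    from W W' have tx_eq: "transmissions psi N (W, s) = transmissions psi N (W', s)"
      by (auto simp: f_def)
    have tx: "\<forall>n<N. psi n W s = psi n W' s"
    proof (intro allI impI)
      fix n assume "n < N"
      with fun_cong[OF tx_eq, of n] show "psi n W s = psi n W' s" by (simp add: transmissions_def)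
    qed
    have outside: "\<forall>j\<in>{..<K} - D. W j = W' j"
    proof
      fix j assume "j \<in> {..<K} - D"
      with fun_cong[OF r, of j] show "W j = W' j" by (simp add: r_def)
    qed
    show "W = W'"
      by (rule secure_scheme_recovers_isolated[OF ss D iso that _ _ tx outside])
        (use W W' in \<open>simp_all add: MS_def\<close>)
  qed
  have "pmf (map_pmf f (pair_pmf (pmf_of_set MS) P)) z \<le> card (r ` MS) / card MS"
  proof (rule pmf_map_pair_pmf_of_set_le)
    show "finite MS" "MS \<noteq> {}" using fin by (simp_all add: MS_def finite_msgspace msgspace_nonempty)
  qed (rule inj)
  also have "\<dots> \<le> q ^ (L * (K - card D)) / card MS"
  proof (intro divide_right_mono)
    have "r W \<in> PiE ({..<K} - D) (\<lambda>_. fvec G L)" if "W \<in> MS" for W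
      using that unfolding r_def MS_def by (simp add: restrict_PiE_iff msgspace_memD)
    then have "r ` MS \<subseteq> PiE ({..<K} - D) (\<lambda>_. fvec G L)" by blast
    then have "card (r ` MS) \<le> card (PiE ({..<K} - D) (\<lambda>_. fvec G L))"
      using fin by (intro card_mono) (simp_all add: finite_fvec finite_PiE)
    also have "\<dots> = q ^ (L * (K - card D))"
      using fin D by (simp add: q_def card_PiE card_fvec card_Diff_subset finite_subset power_mult)
    finally show "real (card (r ` MS)) \<le> q ^ (L * (K - card D))" by simp
  qed simp
  also have "\<dots> = 1 / real q ^ (card D * L)"
  proof -
    have "card D \<le> K" using card_mono[OF _ D] by simp
    then have "card MS = q ^ (L * (K - card D)) * q ^ (card D * L)"
      using fin by (simp add: q_def MS_def card_msgspace algebra_simps flip: power_add)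
    moreover have "0 < q" using fin zero_closed by (auto simp: q_def card_gt_0_iff)
    ultimately show ?thesis by simp
  qed
  finally show ?thesis by (simp add: f_def MS_def q_def joint_def)
qed

lemma secure_scheme_ent_transmissions_ge:
  assumes ss: "secure_scheme G K N Nr M L Z P T psi" and fin: "finite (carrier G)"
    and nontrivial: "carrier G \<noteq> {\<zero>}"
    and D: "D \<subseteq> {..<K}" and iso: "\<forall>k\<in>D. Nr \<le> card (isolating_servers Z N D k)"
  shows "real (card D * L)
           \<le> H (card (carrier G)) (joint G K L P) (\<lambda>\<omega>. (transmissions psi N \<omega>, msum G K L (fst \<omega>)))"
proof -
  define q where "q = real (card (carrier G))"
  have q: "1 < q" using card_carrier_gt_1[OF fin nontrivial] by (simp add: q_def)
  have "finite (set_pmf (joint G K L P))"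
    using fin secure_scheme_finite_randomness[OF ss] by (simp add: set_pmf_joint finite_msgspace)
  then have "- log q (1 / q ^ (card D * L))
      \<le> ent q (map_pmf (\<lambda>\<omega>. (transmissions psi N \<omega>, msum G K L (fst \<omega>))) (joint G K L P))"
    by (intro neg_log_le_ent) (use q secure_scheme_pmf_transmissions_le[OF ss fin D iso] in \<open>simp_all add: q_def\<close>)
  moreover have "- log q (1 / q ^ (card D * L)) = real (card D * L)"
    using q by (simp add: log_divide log_nat_power)
  ultimately show ?thesis by (simp add: H_def q_def)
qed

lemma secure_scheme_ent_transmissions_le:
  assumes ss: "secure_scheme G K N Nr M L Z P T psi" and fin: "finite (carrier G)"
    and nontrivial: "carrier G \<noteq> {\<zero>}"
  shows "H (card (carrier G)) (joint G K L P) (\<lambda>\<omega>. (transmissions psi N \<omega>, msum G K L (fst \<omega>)))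
           \<le> ent (card (carrier G)) P + L"
proof -
  define q where "q = real (card (carrier G))"
  define \<mu> where "\<mu> = joint G K L P"
  define S where "S \<omega> = msum G K L (fst \<omega>)" for \<omega> :: "(nat \<Rightarrow> 'a list) \<times> nat"
  have q: "1 < q" using card_carrier_gt_1[OF fin nontrivial] by (simp add: q_def)
  have finP: "finite (set_pmf P)" by (rule secure_scheme_finite_randomness[OF ss])
  have fin_\<mu>: "finite (set_pmf \<mu>)"
    using fin finP by (simp add: \<mu>_def set_pmf_joint finite_msgspace)
  have ent_msgs: "ent q (pmf_of_set (msgspace G K L)) = real (L * K)"
    using fin q by (simp add: ent_pmf_of_set finite_msgspace msgspace_nonempty card_msgspace q_def
        log_nat_power)
  have "real (L * K) \<le> H q \<mu> (\<lambda>\<omega>. (fst \<omega>, S \<omega>))"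
  proof -
    have "ent q (map_pmf fst (map_pmf (\<lambda>\<omega>. (fst \<omega>, S \<omega>)) \<mu>)) \<le> H q \<mu> (\<lambda>\<omega>. (fst \<omega>, S \<omega>))"
      unfolding H_def using fin_\<mu> q by (intro ent_map_pmf_le) simp_all
    moreover have "map_pmf fst (map_pmf (\<lambda>\<omega>. (fst \<omega>, S \<omega>)) \<mu>) = pmf_of_set (msgspace G K L)"
      by (simp add: \<mu>_def joint_def pmf.map_comp o_def map_fst_pair_pmf)
    ultimately show ?thesis using ent_msgs by simp
  qed
  moreover have "H q \<mu> (\<lambda>\<omega>. (fst \<omega>, transmissions psi N \<omega>, S \<omega>)) \<le> real (L * K) + ent q P"
  proof -
    have "H q \<mu> (\<lambda>\<omega>. (fst \<omega>, transmissions psi N \<omega>, S \<omega>)) \<le> ent q \<mu>"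
      unfolding H_def using fin_\<mu> q by (intro ent_map_pmf_le) simp_all
    also have "ent q \<mu> = real (L * K) + ent q P"
      using fin finP ent_msgs
      by (simp add: \<mu>_def joint_def ent_pair_pmf finite_msgspace msgspace_nonempty)
    finally show ?thesis .
  qed
  moreover have "H q \<mu> S \<le> L"
  proof -
    have "set_pmf (map_pmf S \<mu>) \<subseteq> fvec G L"
      using fin by (auto simp: S_def \<mu>_def set_pmf_joint msum_closed)
    then have "card (set_pmf (map_pmf S \<mu>)) \<le> card (carrier G) ^ L"
      using card_mono[OF finite_fvec[OF fin]] card_fvec[OF fin] by metis
    then have "H q \<mu> S \<le> log q (real (card (carrier G) ^ L))"
      unfolding H_def using fin_\<mu> q by (intro ent_le_log_card) simp_all
    also have "\<dots> = L" using q by (simp add: q_def log_nat_power)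
    finally show ?thesis .
  qed
  moreover have "H q \<mu> (\<lambda>\<omega>. (fst \<omega>, S \<omega>)) + H q \<mu> (\<lambda>\<omega>. (transmissions psi N \<omega>, S \<omega>))
      - H q \<mu> (\<lambda>\<omega>. (fst \<omega>, transmissions psi N \<omega>, S \<omega>)) - H q \<mu> S = 0"
    using secure_scheme_security[OF ss] by (simp add: cmi_def q_def \<mu>_def S_def[abs_def])
  ultimately show ?thesis by (simp add: q_def \<mu>_def S_def[abs_def])
qed

lemma secure_scheme_rand_size_ge:
  assumes ss: "secure_scheme G K N Nr M L Z P T psi" and fin: "finite (carrier G)"
    and nontrivial: "carrier G \<noteq> {\<zero>}" and "0 < L"
    and D: "D \<subseteq> {..<K}" and iso: "\<forall>k\<in>D. Nr \<le> card (isolating_servers Z N D k)"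
  shows "real (card D) - 1 \<le> rand_size G L P"
proof -
  have "real (card D * L) \<le> ent (card (carrier G)) P + L"
    using secure_scheme_ent_transmissions_ge[OF ss fin nontrivial D iso]
      secure_scheme_ent_transmissions_le[OF ss fin nontrivial] by linarith
  then have "(real (card D) - 1) * L \<le> ent (card (carrier G)) P" by (simp add: algebra_simps)
  with \<open>0 < L\<close> show ?thesis by (simp add: rand_size_def pos_le_divide_eq)
qed

end

theorem corollary2:
  fixes K N Nr M :: nat
  assumes "0 < K" "0 < Nr" "Nr \<le> N" "N dvd K"
    and "M = (K div N) * (N - Nr + 1)"
  shows "\<exists>q0::nat. \<forall>(F :: 'f ring) (L::nat) Z P T psi.
           field F \<and> finite (carrier F) \<and> q0 \<le> card (carrier F) \<and> 0 < L \<and>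
           secure_scheme F K N Nr M L Z P T psi \<and>
           comm_cost N Nr L T = R_star F K N Nr M L
           \<longrightarrow> real_of_int (\<lceil>real N / real (N - Nr + 1)\<rceil> - 1) \<le> rand_size F L P"
proof -
  have "real_of_int (\<lceil>real N / real (N - Nr + 1)\<rceil> - 1) \<le> rand_size F L P"
    if "field F" "finite (carrier F)" "0 < L" and ss: "secure_scheme F K N Nr M L Z P T psi"
    for F :: "'f ring" and L Z P T psi
  proof -
    interpret field F by fact
    have nontrivial: "carrier F \<noteq> {\<zero>\<^bsub>F\<^esub>}" by (simp add: carrier_one_not_zero)
    have budget: "N * M = K * (N - Nr + 1)" and "0 < M"
      using assms by (auto elim!: dvdE simp: algebra_simps)
    have replication: "\<forall>k<K. N - Nr + 1 \<le> card (holders Z N k)"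
      using secure_scheme_replication[OF ss \<open>0 < L\<close> nontrivial \<open>Nr \<le> N\<close>] by blast
    obtain C where C: "C \<subseteq> {..<K}" "N \<le> card C * (N - Nr + 1)"
      and iso: "\<forall>k\<in>C. Nr \<le> card (isolating_servers Z N C k)"
      by (rule exists_isolated_datasets[OF secure_scheme_storage[OF ss] replication budget
            \<open>0 < M\<close> \<open>Nr \<le> N\<close>])
    have "real N \<le> real (card C) * real (N - Nr + 1)"
      using C(2) by (metis of_nat_le_iff of_nat_mult)
    then have "real N / real (N - Nr + 1) \<le> card C"
      by (simp add: pos_divide_le_eq)
    then have "\<lceil>real N / real (N - Nr + 1)\<rceil> \<le> card C" by (simp add: ceiling_le)
    moreover have "real (card C) - 1 \<le> rand_size F L P"
      by (rule secure_scheme_rand_size_ge[OF ss \<open>finite (carrier F)\<close> nontrivial \<open>0 < L\<close> C(1) iso])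
    ultimately show ?thesis by linarith
  qed
  then show ?thesis by blast
qed

end
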